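(* For all $t\in\mathbb R$ and all $0<z\le\varepsilon\le\infty$, $$\sum_{k=1}^n|f_k(t)-1|^2\le t^4\Big[\frac z2\sup_{0<x\le\varepsilon}xL_n(x)+\frac14\sum_{k=1}^n\sigma_k^2\sigma_k^2(z)\Big]\le t^4\Big[\frac z2\sup_{0<x\le\varepsilon}xL_n(x)+\frac{\alpha(\varepsilon)}{4z}\sup_{0<x\le\varepsilon}\big(xL_n(x)\big)^{5/3}\Big].$$
   Context: $X_1,\dots,X_n$ are independent real random variables with $\mathbb E X_k=0$, $\sigma_k^2=\mathbb E X_k^2<\infty$, normalized so that $\sum_k\sigma_k^2=1$; $f_k(t)=\mathbb E e^{itX_k}$; $\sigma_k^2(z)=\mathbb E X_k^2\mathbf 1(|X_k|\ge z)$ and $L_n(z)=\sum_k\sigma_k^2(z)$ for $z\ge0$. For $\varepsilon\in(0,\infty]$, $\alpha(\varepsilon)=\inf_{0<x<\min\{\varepsilon,1\}}(x-x^3)^{-2/3}$, i.e. $(\varepsilon-\varepsilon^3)^{-2/3}$ if $\varepsilon\le3^{-1/2}$ and $3\cdot2^{-2/3}$ otherwise. *)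

theory Defs
  imports "HOL-Probability.Probability"
begin

definition alpha :: "ereal \<Rightarrow> real" where
  "alpha \<epsilon> = Inf {(x - x ^ 3) powr (-(2/3)) | x::real. 0 < x \<and> ereal x < \<epsilon> \<and> x < 1}"

end

theory Submission
  imports Defs
begin

(*
  Each |f_k(t) - 1| is at most t^2 sigma_k^2 / 2, so the left-hand side is at most
  t^4/4 * sum_k sigma_k^4, and sigma_k^4 = sigma_k^2 (sigma_k^2 - sigma_k^2(z)) + sigma_k^2 sigma_k^2(z).

  For the first part, sigma^2 - sigma^2(z) <= E min(X^2, z^2) = int_0^z 2y P(|X| >= y) dy, and
  sigma^2 P(|X| >= y) <= sigma^2(y); summing over k bounds it by int_0^z 2y L_n(y) dy, hence by
  2z sup x L_n(x).

  For the second part, put s = sup x L_n(x) over 0 < x <= eps. Since sigma_k^2 - x^2 <= sigma_k^2(x)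
  <= L_n(x), we get x (sigma_k^2 - x^2) <= s; choosing x = sigma_k u with 0 < u < min(eps, 1) gives
  sigma_k^3 (u - u^3) <= s, i.e. sigma_k^2 <= alpha(eps) s^(2/3). Together with L_n(z) <= s/z this
  bounds sum_k sigma_k^2 sigma_k^2(z) by alpha(eps)/z * s^(5/3).
*)

lemma (in prob_space) char_distr_minus_one_le:
  fixes X :: "'a \<Rightarrow> real"
  assumes [measurable]: "X \<in> borel_measurable M" and i1: "integrable M X"
    and i2: "integrable M (\<lambda>\<omega>. (X \<omega>)\<^sup>2)" and "expectation X = 0"
  shows "cmod (char (distr M borel X) t - 1) \<le> t\<^sup>2 / 2 * expectation (\<lambda>\<omega>. (X \<omega>)\<^sup>2)"
proof -
  have integ_iexp: "integrable M (\<lambda>\<omega>. iexp (t * X \<omega>))"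
    by (intro integrable_const_bound[of _ 1]) auto
  have integ_lin: "integrable M (\<lambda>\<omega>. 1 + \<i> * complex_of_real (t * X \<omega>))"
    using i1 by (intro Bochner_Integration.integrable_add integrable_mult_right integrable_of_real) auto
  have "char (distr M borel X) t - 1 = (CLINT \<omega>|M. iexp (t * X \<omega>) - (1 + \<i> * complex_of_real (t * X \<omega>)))"
    using integ_iexp integ_lin i1 \<open>expectation X = 0\<close>
    by (simp add: char_def integral_distr Bochner_Integration.integral_diff
        Bochner_Integration.integral_add integral_mult_right_zero prob_space)
  also have "cmod \<dots> \<le> expectation (\<lambda>\<omega>. cmod (iexp (t * X \<omega>) - (1 + \<i> * complex_of_real (t * X \<omega>))))"
    by (rule integral_norm_bound)
  also have "\<dots> \<le> expectation (\<lambda>\<omega>. t\<^sup>2 / 2 * (X \<omega>)\<^sup>2)"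
  proof (rule integral_mono)
    show "integrable M (\<lambda>\<omega>. cmod (iexp (t * X \<omega>) - (1 + \<i> * complex_of_real (t * X \<omega>))))"
      by (intro integrable_norm Bochner_Integration.integrable_diff integ_iexp integ_lin)
    show "integrable M (\<lambda>\<omega>. t\<^sup>2 / 2 * (X \<omega>)\<^sup>2)"
      using i2 by (rule integrable_mult_right)
    fix \<omega>
    show "cmod (iexp (t * X \<omega>) - (1 + \<i> * complex_of_real (t * X \<omega>))) \<le> t\<^sup>2 / 2 * (X \<omega>)\<^sup>2"
      using iexp_approx1[of "t * X \<omega>" 1] by (simp add: numeral_2_eq_2 power_mult_distrib field_simps)
  qed
  finally show ?thesis
    by simp
qed

lemma (in prob_space) sum_char_distr_minus_one_sq_le:
  fixes X :: "'i \<Rightarrow> 'a \<Rightarrow> real"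
  assumes "\<And>k. k \<in> K \<Longrightarrow> X k \<in> borel_measurable M" and "\<And>k. k \<in> K \<Longrightarrow> integrable M (X k)"
    and "\<And>k. k \<in> K \<Longrightarrow> integrable M (\<lambda>\<omega>. (X k \<omega>)\<^sup>2)" and "\<And>k. k \<in> K \<Longrightarrow> expectation (X k) = 0"
  shows "(\<Sum>k\<in>K. (cmod (char (distr M borel (X k)) t - 1))\<^sup>2)
    \<le> t ^ 4 / 4 * (\<Sum>k\<in>K. (expectation (\<lambda>\<omega>. (X k \<omega>)\<^sup>2))\<^sup>2)"
proof -
  have "(\<Sum>k\<in>K. (cmod (char (distr M borel (X k)) t - 1))\<^sup>2)
      \<le> (\<Sum>k\<in>K. (t\<^sup>2 / 2 * expectation (\<lambda>\<omega>. (X k \<omega>)\<^sup>2))\<^sup>2)"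
    using char_distr_minus_one_le[OF assms] by (intro sum_mono power_mono) auto
  then show ?thesis
    by (simp add: sum_distrib_left power_mult_distrib power_divide flip: power_mult)
qed

definition tail_moment :: "'a measure \<Rightarrow> ('a \<Rightarrow> real) \<Rightarrow> real \<Rightarrow> real" where
  "tail_moment M X y = (\<integral>\<omega>. (X \<omega>)\<^sup>2 * indicator {\<omega>. y \<le> \<bar>X \<omega>\<bar>} \<omega> \<partial>M)"

lemma tail_moment_nonneg: "0 \<le> tail_moment M X y"
  unfolding tail_moment_def by simp

lemma integrable_sq_indicator:
  fixes X :: "'a \<Rightarrow> real"
  assumes [measurable]: "X \<in> borel_measurable M" "Measurable.pred M Q"
    and "integrable M (\<lambda>\<omega>. (X \<omega>)\<^sup>2)"
  shows "integrable M (\<lambda>\<omega>. (X \<omega>)\<^sup>2 * indicator {\<omega>. Q \<omega>} \<omega>)"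
  by (rule Bochner_Integration.integrable_bound[OF assms(3)]) (auto simp: indicator_def)

lemma second_moment_eq_truncated_plus_tail:
  fixes X :: "'a \<Rightarrow> real"
  assumes [measurable]: "X \<in> borel_measurable M" and "integrable M (\<lambda>\<omega>. (X \<omega>)\<^sup>2)"
  shows "(\<integral>\<omega>. (X \<omega>)\<^sup>2 \<partial>M)
    = (\<integral>\<omega>. (X \<omega>)\<^sup>2 * indicator {\<omega>. \<bar>X \<omega>\<bar> < y} \<omega> \<partial>M) + tail_moment M X y"
proof -
  have "(\<lambda>\<omega>. (X \<omega>)\<^sup>2) = (\<lambda>\<omega>. (X \<omega>)\<^sup>2 * indicator {\<omega>. \<bar>X \<omega>\<bar> < y} \<omega>
      + (X \<omega>)\<^sup>2 * indicator {\<omega>. y \<le> \<bar>X \<omega>\<bar>} \<omega>)"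
    by (auto simp: fun_eq_iff indicator_def)
  moreover have "integrable M (\<lambda>\<omega>. (X \<omega>)\<^sup>2 * indicator {\<omega>. \<bar>X \<omega>\<bar> < y} \<omega>)"
    "integrable M (\<lambda>\<omega>. (X \<omega>)\<^sup>2 * indicator {\<omega>. y \<le> \<bar>X \<omega>\<bar>} \<omega>)"
    by (rule integrable_sq_indicator[OF assms(1) _ assms(2)], measurable)+
  ultimately show ?thesis
    unfolding tail_moment_def by (simp add: Bochner_Integration.integral_add)
qed

lemma borel_measurable_tail_moment:
  fixes X :: "'a \<Rightarrow> real"
  assumes [measurable]: "X \<in> borel_measurable M" and "sigma_finite_measure M"
  shows "tail_moment M X \<in> borel_measurable borel"
proof -
  have "(\<lambda>(y, \<omega>). (X \<omega>)\<^sup>2 * indicator {\<omega>. y \<le> \<bar>X \<omega>\<bar>} \<omega>)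
      = (\<lambda>(y :: real, \<omega>). if y \<le> \<bar>X \<omega>\<bar> then (X \<omega>)\<^sup>2 else 0)"
    by (auto simp: fun_eq_iff)
  then have "(\<lambda>(y :: real, \<omega>). (X \<omega>)\<^sup>2 * indicator {\<omega>. y \<le> \<bar>X \<omega>\<bar>} \<omega>)
      \<in> borel_measurable (borel \<Otimes>\<^sub>M M)"
    by simp
  then show ?thesis
    unfolding tail_moment_def[abs_def] using assms(2)
    by (intro sigma_finite_measure.borel_measurable_lebesgue_integral)
qed

lemma tail_moment_le_second_moment:
  fixes X :: "'a \<Rightarrow> real"
  assumes "X \<in> borel_measurable M" and "integrable M (\<lambda>\<omega>. (X \<omega>)\<^sup>2)"
  shows "tail_moment M X y \<le> (\<integral>\<omega>. (X \<omega>)\<^sup>2 \<partial>M)"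
  using second_moment_eq_truncated_plus_tail[OF assms, of y] by simp

lemma second_moment_minus_tail_le_min:
  fixes X :: "'a \<Rightarrow> real"
  assumes [measurable]: "X \<in> borel_measurable M" and i2: "integrable M (\<lambda>\<omega>. (X \<omega>)\<^sup>2)"
    and "0 \<le> y"
  shows "(\<integral>\<omega>. (X \<omega>)\<^sup>2 \<partial>M) - tail_moment M X y \<le> (\<integral>\<omega>. min ((X \<omega>)\<^sup>2) (y\<^sup>2) \<partial>M)"
proof -
  have "(\<integral>\<omega>. (X \<omega>)\<^sup>2 * indicator {\<omega>. \<bar>X \<omega>\<bar> < y} \<omega> \<partial>M) \<le> (\<integral>\<omega>. min ((X \<omega>)\<^sup>2) (y\<^sup>2) \<partial>M)"
  proof (rule integral_mono)
    show "integrable M (\<lambda>\<omega>. (X \<omega>)\<^sup>2 * indicator {\<omega>. \<bar>X \<omega>\<bar> < y} \<omega>)"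
      by (rule integrable_sq_indicator[OF assms(1) _ i2]) measurable
    show "integrable M (\<lambda>\<omega>. min ((X \<omega>)\<^sup>2) (y\<^sup>2))"
      by (rule Bochner_Integration.integrable_bound[OF i2]) auto
    show "(X \<omega>)\<^sup>2 * indicator {\<omega>. \<bar>X \<omega>\<bar> < y} \<omega> \<le> min ((X \<omega>)\<^sup>2) (y\<^sup>2)" for \<omega>
      using \<open>0 \<le> y\<close> by (auto simp: indicator_def power2_le_iff_abs_le)
  qed
  then show ?thesis
    using second_moment_eq_truncated_plus_tail[OF assms(1,2), of y] by simp
qed

lemma (in prob_space) second_moment_le_tail_moment_plus_sq:
  fixes X :: "'a \<Rightarrow> real"
  assumes "X \<in> borel_measurable M" and "integrable M (\<lambda>\<omega>. (X \<omega>)\<^sup>2)" and "0 \<le> y"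
  shows "expectation (\<lambda>\<omega>. (X \<omega>)\<^sup>2) \<le> tail_moment M X y + y\<^sup>2"
proof -
  note [measurable] = assms(1)
  have "expectation (\<lambda>\<omega>. min ((X \<omega>)\<^sup>2) (y\<^sup>2)) \<le> expectation (\<lambda>\<omega>. y\<^sup>2)"
    by (rule integral_mono) (auto intro: Bochner_Integration.integrable_bound[OF assms(2)])
  then show ?thesis
    using second_moment_minus_tail_le_min[OF assms] by (simp add: prob_space)
qed

(* Chebyshev's association inequality: X^2 and the indicator of {|X| >= y} are comonotone. *)

lemma (in prob_space) second_moment_mult_prob_le_tail_moment:
  fixes X :: "'a \<Rightarrow> real"
  assumes [measurable]: "X \<in> borel_measurable M" and i2: "integrable M (\<lambda>\<omega>. (X \<omega>)\<^sup>2)"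
    and "0 \<le> y"
  shows "expectation (\<lambda>\<omega>. (X \<omega>)\<^sup>2) * prob {\<omega> \<in> space M. y \<le> \<bar>X \<omega>\<bar>} \<le> tail_moment M X y"
proof -
  define P where "P = prob {\<omega> \<in> space M. y \<le> \<bar>X \<omega>\<bar>}"
  define A where "A = expectation (\<lambda>\<omega>. (X \<omega>)\<^sup>2 * indicator {\<omega>. \<bar>X \<omega>\<bar> < y} \<omega>)"
  define T where "T = tail_moment M X y"
  have "{\<omega> \<in> space M. \<bar>X \<omega>\<bar> < y} = space M - {\<omega> \<in> space M. y \<le> \<bar>X \<omega>\<bar>}"
    by auto
  then have prob_lt: "prob {\<omega> \<in> space M. \<bar>X \<omega>\<bar> < y} = 1 - P"
    unfolding P_def by (simp add: prob_compl)
  have A_le: "A \<le> y\<^sup>2 * (1 - P)"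
  proof -
    have "A \<le> expectation (\<lambda>\<omega>. y\<^sup>2 * indicator {\<omega> \<in> space M. \<bar>X \<omega>\<bar> < y} \<omega>)"
      unfolding A_def
    proof (rule integral_mono)
      show "integrable M (\<lambda>\<omega>. (X \<omega>)\<^sup>2 * indicator {\<omega>. \<bar>X \<omega>\<bar> < y} \<omega>)"
        by (rule integrable_sq_indicator[OF assms(1) _ i2]) measurable
      show "(X \<omega>)\<^sup>2 * indicator {\<omega>. \<bar>X \<omega>\<bar> < y} \<omega> \<le> y\<^sup>2 * indicator {\<omega> \<in> space M. \<bar>X \<omega>\<bar> < y} \<omega>"
        if "\<omega> \<in> space M" for \<omega>
        using that \<open>0 \<le> y\<close> by (auto simp: indicator_def power2_le_iff_abs_le)
    qed (auto simp: emeasure_eq_measure)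
    then show ?thesis using prob_lt by simp
  qed
  have T_ge: "y\<^sup>2 * P \<le> T"
  proof -
    have "y\<^sup>2 * P = expectation (\<lambda>\<omega>. y\<^sup>2 * indicator {\<omega> \<in> space M. y \<le> \<bar>X \<omega>\<bar>} \<omega>)"
      unfolding P_def by simp
    also have "\<dots> \<le> T"
      unfolding T_def tail_moment_def
    proof (rule integral_mono)
      show "integrable M (\<lambda>\<omega>. (X \<omega>)\<^sup>2 * indicator {\<omega>. y \<le> \<bar>X \<omega>\<bar>} \<omega>)"
        by (rule integrable_sq_indicator[OF assms(1) _ i2]) measurable
      show "y\<^sup>2 * indicator {\<omega> \<in> space M. y \<le> \<bar>X \<omega>\<bar>} \<omega> \<le> (X \<omega>)\<^sup>2 * indicator {\<omega>. y \<le> \<bar>X \<omega>\<bar>} \<omega>"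
        if "\<omega> \<in> space M" for \<omega>
        using that \<open>0 \<le> y\<close> by (auto simp: indicator_def abs_le_square_iff[symmetric])
    qed (auto simp: emeasure_eq_measure)
    finally show ?thesis .
  qed
  have "0 \<le> P" "P \<le> 1"
    unfolding P_def by auto
  then have "A * P \<le> T * (1 - P)"
    using mult_right_mono[OF A_le \<open>0 \<le> P\<close>] mult_right_mono[OF T_ge, of "1 - P"]
    by (simp add: algebra_simps)
  moreover have "expectation (\<lambda>\<omega>. (X \<omega>)\<^sup>2) = A + T"
    unfolding A_def T_def by (rule second_moment_eq_truncated_plus_tail[OF assms(1) i2])
  ultimately show ?thesis
    unfolding P_def[symmetric] T_def[symmetric] by (simp add: algebra_simps)
qed

lemma nn_integral_two_mult_indicator_atLeastAtMost:
  fixes c :: real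
  assumes "0 \<le> c"
  shows "(\<integral>\<^sup>+y. ennreal (2 * y) * indicator {0..c} y \<partial>lborel) = ennreal (c\<^sup>2)"
proof -
  have "((\<lambda>y. 2 * y) has_integral (c\<^sup>2 - 0\<^sup>2)) {0..c}"
    using assms
    by (intro fundamental_theorem_of_calculus)
       (auto intro!: derivative_eq_intros simp: has_real_derivative_iff_has_vector_derivative[symmetric])
  then show ?thesis
    by (subst nn_integral_has_integral_lebesgue') auto
qed

lemma (in sigma_finite_measure) nn_integral_min_sq_eq_layer_cake:
  fixes X :: "'a \<Rightarrow> real"
  assumes [measurable]: "X \<in> borel_measurable M" and "0 \<le> z"
  shows "(\<integral>\<^sup>+\<omega>. ennreal (min ((X \<omega>)\<^sup>2) (z\<^sup>2)) \<partial>M)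
    = (\<integral>\<^sup>+y. ennreal (2 * y) * indicator {0..z} y * emeasure M {\<omega> \<in> space M. y \<le> \<bar>X \<omega>\<bar>} \<partial>lborel)"
proof -
  interpret pair_sigma_finite M lborel
    by (intro pair_sigma_finite.intro sigma_finite_lborel) unfold_locales
  define g where "g \<omega> y = ennreal (2 * y) * indicator {0..z} y * indicator {..\<bar>X \<omega>\<bar>} y" for \<omega> y
  have inner: "(\<integral>\<^sup>+y. g \<omega> y \<partial>lborel) = ennreal (min ((X \<omega>)\<^sup>2) (z\<^sup>2))" for \<omega>
  proof -
    have "g \<omega> = (\<lambda>y. ennreal (2 * y) * indicator {0..min \<bar>X \<omega>\<bar> z} y)"
      by (auto simp: g_def indicator_def fun_eq_iff)
    moreover have "(min \<bar>X \<omega>\<bar> z)\<^sup>2 = min ((X \<omega>)\<^sup>2) (z\<^sup>2)"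
      using \<open>0 \<le> z\<close> by (auto simp: min_def power2_le_iff_abs_le)
    ultimately show ?thesis
      using nn_integral_two_mult_indicator_atLeastAtMost[of "min \<bar>X \<omega>\<bar> z"] \<open>0 \<le> z\<close> by simp
  qed
  have "case_prod g = (\<lambda>p. ennreal (2 * snd p) * indicator {0..z} (snd p)
      * (if snd p \<le> \<bar>X (fst p)\<bar> then 1 else 0))"
    by (auto simp: g_def fun_eq_iff indicator_def)
  then have "case_prod g \<in> borel_measurable (M \<Otimes>\<^sub>M lborel)"
    by simp
  then have "(\<integral>\<^sup>+\<omega>. (\<integral>\<^sup>+y. g \<omega> y \<partial>lborel) \<partial>M) = (\<integral>\<^sup>+y. (\<integral>\<^sup>+\<omega>. g \<omega> y \<partial>M) \<partial>lborel)"
    by (rule Fubini'[symmetric])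
  moreover have "(\<integral>\<^sup>+\<omega>. g \<omega> y \<partial>M)
      = ennreal (2 * y) * indicator {0..z} y * emeasure M {\<omega> \<in> space M. y \<le> \<bar>X \<omega>\<bar>}" for y
  proof -
    have "(\<integral>\<^sup>+\<omega>. g \<omega> y \<partial>M)
        = (\<integral>\<^sup>+\<omega>. ennreal (2 * y) * indicator {0..z} y * indicator {\<omega> \<in> space M. y \<le> \<bar>X \<omega>\<bar>} \<omega> \<partial>M)"
      by (intro nn_integral_cong) (auto simp: g_def indicator_def)
    then show ?thesis
      by (simp add: nn_integral_cmult)
  qed
  ultimately show ?thesis
    by (simp add: inner)
qed

lemma (in prob_space) second_moment_mult_truncated_le_nn_integral:
  fixes X :: "'a \<Rightarrow> real"
  assumes [measurable]: "X \<in> borel_measurable M" and i2: "integrable M (\<lambda>\<omega>. (X \<omega>)\<^sup>2)"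
    and "0 \<le> z"
  defines "\<sigma> \<equiv> expectation (\<lambda>\<omega>. (X \<omega>)\<^sup>2)"
  shows "ennreal (\<sigma> * (\<sigma> - tail_moment M X z))
    \<le> (\<integral>\<^sup>+y. ennreal (2 * y * tail_moment M X y) * indicator {0..z} y \<partial>lborel)"
proof -
  define m where "m = expectation (\<lambda>\<omega>. min ((X \<omega>)\<^sup>2) (z\<^sup>2))"
  have "0 \<le> \<sigma>"
    unfolding \<sigma>_def by simp
  have "integrable M (\<lambda>\<omega>. min ((X \<omega>)\<^sup>2) (z\<^sup>2))"
    by (rule Bochner_Integration.integrable_bound[OF i2]) auto
  then have "ennreal m = (\<integral>\<^sup>+\<omega>. ennreal (min ((X \<omega>)\<^sup>2) (z\<^sup>2)) \<partial>M)"
    unfolding m_def by (intro nn_integral_eq_integral[symmetric]) auto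
  also have "\<dots> = (\<integral>\<^sup>+y. ennreal (2 * y) * indicator {0..z} y * emeasure M {\<omega> \<in> space M. y \<le> \<bar>X \<omega>\<bar>} \<partial>lborel)"
    by (rule nn_integral_min_sq_eq_layer_cake[OF assms(1,3)])
  finally have m_eq: "ennreal m = \<dots>" .
  have "ennreal (\<sigma> * (\<sigma> - tail_moment M X z)) \<le> ennreal (\<sigma> * m)"
    using second_moment_minus_tail_le_min[OF assms(1,2,3)] \<open>0 \<le> \<sigma>\<close>
    unfolding \<sigma>_def m_def by (intro ennreal_leI mult_left_mono) auto
  also have "\<dots> = (\<integral>\<^sup>+y. ennreal \<sigma> * (ennreal (2 * y) * indicator {0..z} y
      * emeasure M {\<omega> \<in> space M. y \<le> \<bar>X \<omega>\<bar>}) \<partial>lborel)"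
    using \<open>0 \<le> \<sigma>\<close> unfolding m_def
    by (simp add: ennreal_mult m_eq[unfolded m_def] nn_integral_cmult)
  also have "\<dots> \<le> (\<integral>\<^sup>+y. ennreal (2 * y * tail_moment M X y) * indicator {0..z} y \<partial>lborel)"
  proof (rule nn_integral_mono)
    fix y :: real
    show "ennreal \<sigma> * (ennreal (2 * y) * indicator {0..z} y * emeasure M {\<omega> \<in> space M. y \<le> \<bar>X \<omega>\<bar>})
        \<le> ennreal (2 * y * tail_moment M X y) * indicator {0..z} y"
    proof (cases "0 \<le> y \<and> y \<le> z")
      case True
      then have "2 * y * (\<sigma> * prob {\<omega> \<in> space M. y \<le> \<bar>X \<omega>\<bar>}) \<le> 2 * y * tail_moment M X y"
        using second_moment_mult_prob_le_tail_moment[OF assms(1,2)]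
        unfolding \<sigma>_def by (intro mult_left_mono) auto
      then show ?thesis
        using True \<open>0 \<le> \<sigma>\<close>
        by (simp add: emeasure_eq_measure ennreal_mult[symmetric] ennreal_leI mult_ac)
    qed simp
  qed
  finally show ?thesis .
qed

lemma (in prob_space) sum_second_moment_mult_truncated_le:
  fixes X :: "'i \<Rightarrow> 'a \<Rightarrow> real"
  assumes "finite K" and rv: "\<And>k. k \<in> K \<Longrightarrow> X k \<in> borel_measurable M"
    and i2: "\<And>k. k \<in> K \<Longrightarrow> integrable M (\<lambda>\<omega>. (X k \<omega>)\<^sup>2)"
    and "0 < z" and bound: "\<And>y. 0 < y \<Longrightarrow> y \<le> z \<Longrightarrow> y * (\<Sum>k\<in>K. tail_moment M (X k) y) \<le> s"
  shows "(\<Sum>k\<in>K. expectation (\<lambda>\<omega>. (X k \<omega>)\<^sup>2)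
      * (expectation (\<lambda>\<omega>. (X k \<omega>)\<^sup>2) - tail_moment M (X k) z)) \<le> 2 * z * s"
proof -
  define \<sigma> where "\<sigma> k = expectation (\<lambda>\<omega>. (X k \<omega>)\<^sup>2)" for k
  define T where "T k y = tail_moment M (X k) y" for k y
  have "0 \<le> z * (\<Sum>k\<in>K. T k z)"
    using \<open>0 < z\<close> by (simp add: T_def sum_nonneg tail_moment_nonneg)
  then have "0 \<le> s"
    using bound[of z] \<open>0 < z\<close> by (simp add: T_def)
  have "0 \<le> \<sigma> k * (\<sigma> k - T k z)" if "k \<in> K" for k
    using tail_moment_le_second_moment[OF rv i2, OF that that] unfolding \<sigma>_def T_def by simp
  then have "ennreal (\<Sum>k\<in>K. \<sigma> k * (\<sigma> k - T k z)) = (\<Sum>k\<in>K. ennreal (\<sigma> k * (\<sigma> k - T k z)))"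
    by (simp add: sum_ennreal)
  also have "\<dots> \<le> (\<Sum>k\<in>K. \<integral>\<^sup>+y. ennreal (2 * y * T k y) * indicator {0..z} y \<partial>lborel)"
    using second_moment_mult_truncated_le_nn_integral[OF rv i2] \<open>0 < z\<close>
    unfolding \<sigma>_def T_def by (intro sum_mono) auto
  also have "\<dots> = (\<integral>\<^sup>+y. (\<Sum>k\<in>K. ennreal (2 * y * T k y) * indicator {0..z} y) \<partial>lborel)"
    using borel_measurable_tail_moment[OF rv, OF _ sigma_finite_measure_axioms]
    unfolding T_def by (intro nn_integral_sum[symmetric]) auto
  also have "\<dots> \<le> (\<integral>\<^sup>+y. ennreal (2 * s) * indicator {0..z} y \<partial>lborel)"
  proof (rule nn_integral_mono)
    fix y :: real
    have "0 \<le> y \<Longrightarrow> y \<le> z \<Longrightarrow> 2 * y * (\<Sum>k\<in>K. T k y) \<le> 2 * s"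
      using bound[of y] \<open>0 \<le> s\<close> unfolding T_def by (cases "y = 0") auto
    then show "(\<Sum>k\<in>K. ennreal (2 * y * T k y) * indicator {0..z} y) \<le> ennreal (2 * s) * indicator {0..z} y"
      by (auto simp: T_def indicator_def sum_ennreal tail_moment_nonneg sum_distrib_left[symmetric]
          intro!: ennreal_leI)
  qed
  also have "\<dots> = ennreal (2 * z * s)"
    using \<open>0 \<le> s\<close> \<open>0 < z\<close> by (subst nn_integral_cmult_indicator) (auto simp: ennreal_mult mult_ac)
  finally show ?thesis
    using \<open>0 \<le> s\<close> \<open>0 < z\<close> unfolding \<sigma>_def T_def by (simp add: ennreal_le_iff)
qed

lemma cubic_gap_pos:
  fixes u :: real
  assumes "0 < u" "u < 1"
  shows "0 < u - u ^ 3"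
proof -
  have "u ^ 2 < 1"
    using assms by (simp add: power_less_one_iff)
  then have "u * u ^ 2 < u"
    using assms by simp
  then show ?thesis
    by (simp add: power3_eq_cube power2_eq_square)
qed

lemma exists_pos_less_ereal_less_one:
  assumes "0 < \<epsilon>"
  obtains u where "0 < u" "ereal u < \<epsilon>" "u < 1"
proof -
  obtain r where "0 < ereal r" and r: "ereal r < \<epsilon>"
    using ereal_dense2[OF assms] by blast
  have "ereal (min r (1/2)) \<le> ereal r"
    by simp
  then have "ereal (min r (1/2)) < \<epsilon>"
    using r by (rule le_less_trans)
  then show ?thesis
    using that[of "min r (1/2)"] \<open>0 < ereal r\<close> by simp
qed

lemma alpha_greatest:
  assumes "0 < \<epsilon>"
    and "\<And>u. 0 < u \<Longrightarrow> ereal u < \<epsilon> \<Longrightarrow> u < 1 \<Longrightarrow> c \<le> (u - u ^ 3) powr (-(2/3))"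
  shows "c \<le> alpha \<epsilon>"
  unfolding alpha_def
proof (rule cInf_greatest)
  show "{(x - x ^ 3) powr (-(2/3)) | x. 0 < x \<and> ereal x < \<epsilon> \<and> x < 1} \<noteq> {}"
    using exists_pos_less_ereal_less_one[OF \<open>0 < \<epsilon>\<close>] by blast
qed (use assms(2) in blast)

lemma one_le_alpha:
  assumes "0 < \<epsilon>"
  shows "1 \<le> alpha \<epsilon>"
proof (rule alpha_greatest[OF assms])
  fix u :: real
  assume "0 < u" "ereal u < \<epsilon>" "u < 1"
  have "0 \<le> u ^ 3"
    using \<open>0 < u\<close> by simp
  then have "0 < u - u ^ 3" "u - u ^ 3 \<le> 1"
    using cubic_gap_pos[of u] \<open>0 < u\<close> \<open>u < 1\<close> by linarith+
  then have "0 < (u - u ^ 3) powr (2/3)" "(u - u ^ 3) powr (2/3) \<le> 1"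
    by (auto intro: powr_le1)
  then show "1 \<le> (u - u ^ 3) powr (-(2/3))"
    unfolding powr_minus by (rule one_le_inverse)
qed

lemma le_alpha_mult_powr:
  fixes v s :: real
  assumes "0 < \<epsilon>" "0 \<le> v" "v \<le> 1" "0 \<le> s"
    and bound: "\<And>x. 0 < x \<Longrightarrow> ereal x \<le> \<epsilon> \<Longrightarrow> x * (v - x\<^sup>2) \<le> s"
  shows "v \<le> alpha \<epsilon> * s powr (2/3)"
proof (cases "v = 0")
  case True
  then show ?thesis
    using one_le_alpha[OF \<open>0 < \<epsilon>\<close>] by simp
next
  case False
  define m where "m = sqrt v"
  have "0 < m" "m \<le> 1"
    using False assms(2,3) by (auto simp: m_def)
  have key: "m ^ 3 * (u - u ^ 3) \<le> s" if "0 < u" "ereal u < \<epsilon>" "u < 1" for u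
  proof -
    have "m * u \<le> u"
      using \<open>m \<le> 1\<close> that(1) by (simp add: mult_left_le_one_le)
    then have "ereal (m * u) \<le> ereal u"
      by simp
    then have "ereal (m * u) < \<epsilon>"
      using that(2) by (rule le_less_trans)
    then have "m * u * (v - (m * u)\<^sup>2) \<le> s"
      using \<open>0 < m\<close> that(1) by (intro bound) simp_all
    moreover have "m * u * (v - (m * u)\<^sup>2) = m ^ 3 * (u - u ^ 3)"
      using assms(2) by (simp add: m_def power2_eq_square power3_eq_cube algebra_simps)
    ultimately show ?thesis
      by simp
  qed
  obtain u0 where "0 < u0" "ereal u0 < \<epsilon>" "u0 < 1"
    using exists_pos_less_ereal_less_one[OF \<open>0 < \<epsilon>\<close>] .
  then have "0 < m ^ 3 * (u0 - u0 ^ 3)"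
    using cubic_gap_pos[of u0] \<open>0 < m\<close> by simp
  then have "0 < s"
    using key[OF \<open>0 < u0\<close> \<open>ereal u0 < \<epsilon>\<close> \<open>u0 < 1\<close>] by linarith
  have "v / s powr (2/3) \<le> alpha \<epsilon>"
  proof (rule alpha_greatest[OF \<open>0 < \<epsilon>\<close>])
    fix u :: real
    assume u: "0 < u" "ereal u < \<epsilon>" "u < 1"
    have "0 < u - u ^ 3"
      using cubic_gap_pos u by simp
    have "m ^ 3 = m powr 3" "m\<^sup>2 = m powr 2"
      using powr_realpow[OF \<open>0 < m\<close>, of 3] powr_realpow[OF \<open>0 < m\<close>, of 2] by simp_all
    then have "(m ^ 3) powr (2/3) = m\<^sup>2"
      by (simp add: powr_powr)
    then have "v = (m ^ 3) powr (2/3)"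
      using assms(2) by (simp add: m_def)
    also have "\<dots> \<le> (s / (u - u ^ 3)) powr (2/3)"
      using key[OF u] \<open>0 < u - u ^ 3\<close> \<open>0 < m\<close> by (intro powr_mono2) (auto simp: pos_le_divide_eq)
    also have "\<dots> = s powr (2/3) * (u - u ^ 3) powr (-(2/3))"
      unfolding powr_divide powr_minus by (simp only: divide_inverse)
    finally show "v / s powr (2/3) \<le> (u - u ^ 3) powr (-(2/3))"
      using \<open>0 < s\<close> by (simp add: pos_divide_le_eq mult.commute)
  qed
  then show ?thesis
    using \<open>0 < s\<close> by (simp add: pos_divide_le_eq)
qed

lemma (in prob_space) second_moment_le_alpha_mult_powr:
  fixes X :: "'a \<Rightarrow> real"
  assumes "X \<in> borel_measurable M" and "integrable M (\<lambda>\<omega>. (X \<omega>)\<^sup>2)"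
    and "expectation (\<lambda>\<omega>. (X \<omega>)\<^sup>2) \<le> 1" and "0 < \<epsilon>" and "0 \<le> s"
    and bound: "\<And>x. 0 < x \<Longrightarrow> ereal x \<le> \<epsilon> \<Longrightarrow> x * tail_moment M X x \<le> s"
  shows "expectation (\<lambda>\<omega>. (X \<omega>)\<^sup>2) \<le> alpha \<epsilon> * s powr (2/3)"
proof (rule le_alpha_mult_powr[OF \<open>0 < \<epsilon>\<close> _ assms(3) \<open>0 \<le> s\<close>])
  show "0 \<le> expectation (\<lambda>\<omega>. (X \<omega>)\<^sup>2)"
    by simp
  fix x :: real
  assume "0 < x" "ereal x \<le> \<epsilon>"
  then have "x * (expectation (\<lambda>\<omega>. (X \<omega>)\<^sup>2) - x\<^sup>2) \<le> x * tail_moment M X x"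
    using second_moment_le_tail_moment_plus_sq[OF assms(1,2), of x] by (intro mult_left_mono) auto
  also have "\<dots> \<le> s"
    using bound \<open>0 < x\<close> \<open>ereal x \<le> \<epsilon>\<close> .
  finally show "x * (expectation (\<lambda>\<omega>. (X \<omega>)\<^sup>2) - x\<^sup>2) \<le> s" .
qed

lemma (in prob_space) sum_second_moment_mult_tail_le:
  fixes X :: "'i \<Rightarrow> 'a \<Rightarrow> real"
  assumes "finite K" and rv: "\<And>k. k \<in> K \<Longrightarrow> X k \<in> borel_measurable M"
    and i2: "\<And>k. k \<in> K \<Longrightarrow> integrable M (\<lambda>\<omega>. (X k \<omega>)\<^sup>2)"
    and norm: "(\<Sum>k\<in>K. expectation (\<lambda>\<omega>. (X k \<omega>)\<^sup>2)) = 1"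
    and "0 < z" "ereal z \<le> \<epsilon>"
    and bound: "\<And>x. 0 < x \<Longrightarrow> ereal x \<le> \<epsilon> \<Longrightarrow> x * (\<Sum>k\<in>K. tail_moment M (X k) x) \<le> s"
  shows "(\<Sum>k\<in>K. expectation (\<lambda>\<omega>. (X k \<omega>)\<^sup>2) * tail_moment M (X k) z)
    \<le> alpha \<epsilon> / z * s powr (5/3)"
proof -
  define \<sigma> where "\<sigma> k = expectation (\<lambda>\<omega>. (X k \<omega>)\<^sup>2)" for k
  define L where "L x = (\<Sum>k\<in>K. tail_moment M (X k) x)" for x
  have "0 < \<epsilon>"
    using \<open>0 < z\<close> \<open>ereal z \<le> \<epsilon>\<close> by (auto intro: less_le_trans[of 0 "ereal z"])
  have L_nonneg: "0 \<le> L x" for x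
    unfolding L_def by (simp add: sum_nonneg tail_moment_nonneg)
  have "z * L z \<le> s"
    using bound \<open>0 < z\<close> \<open>ereal z \<le> \<epsilon>\<close> unfolding L_def by blast
  moreover have "0 \<le> z * L z"
    using L_nonneg[of z] \<open>0 < z\<close> by simp
  ultimately have "0 \<le> s" and L_z: "L z \<le> s / z"
    using \<open>0 < z\<close> by (simp_all add: pos_le_divide_eq mult.commute)
  have \<sigma>_le: "\<sigma> k \<le> alpha \<epsilon> * s powr (2/3)" if "k \<in> K" for k
    unfolding \<sigma>_def
  proof (rule second_moment_le_alpha_mult_powr[OF rv i2, OF that that _ \<open>0 < \<epsilon>\<close> \<open>0 \<le> s\<close>])
    show "expectation (\<lambda>\<omega>. (X k \<omega>)\<^sup>2) \<le> 1"
      using member_le_sum[of k K \<sigma>] that norm \<open>finite K\<close> by (simp add: \<sigma>_def)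
    fix x :: real
    assume "0 < x" "ereal x \<le> \<epsilon>"
    have "tail_moment M (X k) x \<le> L x"
      unfolding L_def using that \<open>finite K\<close> by (intro member_le_sum tail_moment_nonneg)
    then have "x * tail_moment M (X k) x \<le> x * L x"
      using \<open>0 < x\<close> by simp
    also have "\<dots> \<le> s"
      using bound \<open>0 < x\<close> \<open>ereal x \<le> \<epsilon>\<close> unfolding L_def by blast
    finally show "x * tail_moment M (X k) x \<le> s" .
  qed
  have powr_five_thirds: "s powr (2/3) * s = s powr (5/3)"
  proof -
    have "s powr (2/3) * s = s powr (2/3) * s powr 1"
      using \<open>0 \<le> s\<close> by (simp add: powr_one)
    also have "\<dots> = s powr (2/3 + 1)"
      by (rule powr_add[symmetric])
    finally show ?thesis
      by simp
  qed
  have "0 \<le> alpha \<epsilon> * s powr (2/3)"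
    using one_le_alpha[OF \<open>0 < \<epsilon>\<close>] by simp
  have "(\<Sum>k\<in>K. \<sigma> k * tail_moment M (X k) z) \<le> (\<Sum>k\<in>K. alpha \<epsilon> * s powr (2/3) * tail_moment M (X k) z)"
    using \<sigma>_le by (intro sum_mono mult_right_mono tail_moment_nonneg)
  also have "\<dots> = alpha \<epsilon> * s powr (2/3) * L z"
    by (simp add: L_def sum_distrib_left)
  also have "\<dots> \<le> alpha \<epsilon> * s powr (2/3) * (s / z)"
    using L_z \<open>0 \<le> alpha \<epsilon> * s powr (2/3)\<close> by (rule mult_left_mono)
  also have "\<dots> = alpha \<epsilon> / z * s powr (5/3)"
    using powr_five_thirds by (simp add: field_simps)
  finally show ?thesis
    unfolding \<sigma>_def .
qed

lemma (in prob_space) sum_char_distr_minus_one_sq_le_SUP: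
  fixes X :: "'i \<Rightarrow> 'a \<Rightarrow> real"
  assumes "finite K" and rv: "\<And>k. k \<in> K \<Longrightarrow> X k \<in> borel_measurable M"
    and i1: "\<And>k. k \<in> K \<Longrightarrow> integrable M (X k)"
    and i2: "\<And>k. k \<in> K \<Longrightarrow> integrable M (\<lambda>\<omega>. (X k \<omega>)\<^sup>2)"
    and mean0: "\<And>k. k \<in> K \<Longrightarrow> expectation (X k) = 0"
    and "0 < z" "ereal z \<le> \<epsilon>"
  shows "ereal (\<Sum>k\<in>K. (cmod (char (distr M borel (X k)) t - 1))\<^sup>2)
    \<le> ereal (t ^ 4) * (ereal (z / 2)
        * (SUP x\<in>{x. 0 < x \<and> ereal x \<le> \<epsilon>}. ereal (x * (\<Sum>k\<in>K. tail_moment M (X k) x)))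
      + ereal (1/4 * (\<Sum>k\<in>K. expectation (\<lambda>\<omega>. (X k \<omega>)\<^sup>2) * tail_moment M (X k) z)))"
    (is "ereal ?lhs \<le> ereal (t ^ 4) * (ereal (z / 2) * ?S + ereal (1/4 * ?B))")
proof -
  define \<sigma> where "\<sigma> k = expectation (\<lambda>\<omega>. (X k \<omega>)\<^sup>2)" for k
  define L where "L x = (\<Sum>k\<in>K. tail_moment M (X k) x)" for x
  have lhs_le: "?lhs \<le> t ^ 4 / 4 * (\<Sum>k\<in>K. (\<sigma> k)\<^sup>2)"
    unfolding \<sigma>_def using rv i1 i2 mean0 by (rule sum_char_distr_minus_one_sq_le)
  have "(0::ereal) \<le> ereal (z * L z)"
    using \<open>0 < z\<close> by (simp add: L_def sum_nonneg tail_moment_nonneg)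
  also have "\<dots> \<le> ?S"
    using \<open>0 < z\<close> \<open>ereal z \<le> \<epsilon>\<close> unfolding L_def by (intro SUP_upper) auto
  finally have "0 \<le> ?S" .
  then show ?thesis
  proof (cases ?S)
    case (real s)
    have bound: "y * L y \<le> s" if "0 < y" "y \<le> z" for y
    proof -
      have "ereal y \<le> \<epsilon>"
        using order_trans[of "ereal y" "ereal z" \<epsilon>] that(2) \<open>ereal z \<le> \<epsilon>\<close> by simp
      then have "ereal (y * L y) \<le> ?S"
        using that(1) unfolding L_def by (intro SUP_upper) auto
      then show ?thesis
        using real by simp
    qed
    have truncated: "(\<Sum>k\<in>K. \<sigma> k * (\<sigma> k - tail_moment M (X k) z)) \<le> 2 * z * s"
      unfolding \<sigma>_def using \<open>finite K\<close> rv i2 \<open>0 < z\<close> bound[unfolded L_def]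
      by (rule sum_second_moment_mult_truncated_le)
    have "(\<Sum>k\<in>K. (\<sigma> k)\<^sup>2) = (\<Sum>k\<in>K. \<sigma> k * (\<sigma> k - tail_moment M (X k) z)) + ?B"
      by (simp add: \<sigma>_def power2_eq_square right_diff_distrib sum_subtractf)
    then have "?lhs \<le> t ^ 4 / 4 * ((\<Sum>k\<in>K. \<sigma> k * (\<sigma> k - tail_moment M (X k) z)) + ?B)"
      using lhs_le by simp
    also have "\<dots> \<le> t ^ 4 / 4 * (2 * z * s + ?B)"
      using truncated by (intro mult_left_mono add_right_mono) auto
    finally show ?thesis
      using real by (simp add: algebra_simps)
  next
    case PInf
    show ?thesis
    proof (cases "t = 0")
      case True
      then have "ereal ?lhs \<le> 0"
        using lhs_le by simp
      then show ?thesis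
        using True by (simp add: zero_ereal_def[symmetric])
    next
      case False
      then show ?thesis
        using PInf \<open>0 < z\<close> by simp
    qed
  qed simp
qed

lemma (in prob_space) sum_second_moment_mult_tail_le_SUP:
  fixes X :: "'i \<Rightarrow> 'a \<Rightarrow> real"
  assumes "finite K" and rv: "\<And>k. k \<in> K \<Longrightarrow> X k \<in> borel_measurable M"
    and i2: "\<And>k. k \<in> K \<Longrightarrow> integrable M (\<lambda>\<omega>. (X k \<omega>)\<^sup>2)"
    and norm: "(\<Sum>k\<in>K. expectation (\<lambda>\<omega>. (X k \<omega>)\<^sup>2)) = 1"
    and "0 < z" "ereal z \<le> \<epsilon>"
  shows "ereal (1/4 * (\<Sum>k\<in>K. expectation (\<lambda>\<omega>. (X k \<omega>)\<^sup>2) * tail_moment M (X k) z))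
    \<le> ereal (alpha \<epsilon> / (4 * z))
      * (SUP x\<in>{x. 0 < x \<and> ereal x \<le> \<epsilon>}. ereal ((x * (\<Sum>k\<in>K. tail_moment M (X k) x)) powr (5/3)))"
    (is "ereal (1/4 * ?B) \<le> ereal ?c * ?S")
proof -
  define L where "L x = (\<Sum>k\<in>K. tail_moment M (X k) x)" for x
  have "0 < \<epsilon>"
    using \<open>0 < z\<close> \<open>ereal z \<le> \<epsilon>\<close> by (auto intro: less_le_trans[of 0 "ereal z"])
  then have "0 < ?c"
    using one_le_alpha[of \<epsilon>] \<open>0 < z\<close> by simp
  have "(0::ereal) \<le> ereal ((z * L z) powr (5/3))"
    by simp
  also have "\<dots> \<le> ?S"
    using \<open>0 < z\<close> \<open>ereal z \<le> \<epsilon>\<close> unfolding L_def by (intro SUP_upper) auto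
  finally have "0 \<le> ?S" .
  then show ?thesis
  proof (cases ?S)
    case (real w)
    have bound: "x * L x \<le> w powr (3/5)" if "0 < x" "ereal x \<le> \<epsilon>" for x
    proof -
      have "ereal ((x * L x) powr (5/3)) \<le> ?S"
        using that unfolding L_def by (intro SUP_upper) auto
      then have "(x * L x) powr (5/3) \<le> w"
        using real by simp
      moreover have "0 \<le> x * L x"
        using that(1) by (simp add: L_def sum_nonneg tail_moment_nonneg)
      ultimately show ?thesis
        using powr_mono2[of "3/5" "(x * L x) powr (5/3)" w] by (simp add: powr_powr)
    qed
    have "(w powr (3/5)) powr (5/3) = w"
      using real \<open>0 \<le> ?S\<close> by (simp add: powr_powr)
    moreover have "?B \<le> alpha \<epsilon> / z * (w powr (3/5)) powr (5/3)"
      using assms bound[unfolded L_def] by (rule sum_second_moment_mult_tail_le)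
    ultimately show ?thesis
      using real by (simp add: field_simps)
  next
    case PInf
    obtain c where "?c = c" "0 < c"
      using \<open>0 < ?c\<close> by blast
    then show ?thesis
      unfolding PInf by simp
  qed simp
qed

theorem lemma5:
  fixes M :: "'a measure" and X :: "nat \<Rightarrow> 'a \<Rightarrow> real" and n :: nat
    and t z :: real and \<epsilon> :: ereal
  assumes "prob_space M"
    and rv: "\<And>k. k \<in> {1..n} \<Longrightarrow> X k \<in> borel_measurable M"
    and indep: "prob_space.indep_vars M (\<lambda>_. borel) X {1..n}"
    and int1: "\<And>k. k \<in> {1..n} \<Longrightarrow> integrable M (X k)"
    and int2: "\<And>k. k \<in> {1..n} \<Longrightarrow> integrable M (\<lambda>\<omega>. (X k \<omega>)\<^sup>2)"
    and mean0: "\<And>k. k \<in> {1..n} \<Longrightarrow> (\<integral>\<omega>. X k \<omega> \<partial>M) = 0"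
    and norm: "(\<Sum>k=1..n. \<integral>\<omega>. (X k \<omega>)\<^sup>2 \<partial>M) = 1"
    and z_pos: "0 < z" and z_le: "ereal z \<le> \<epsilon>"
  shows
   "let \<sigma>2 = (\<lambda>k. \<integral>\<omega>. (X k \<omega>)\<^sup>2 \<partial>M);
        \<sigma>2z = (\<lambda>k y. \<integral>\<omega>. (X k \<omega>)\<^sup>2 * indicator {\<omega>. \<bar>X k \<omega>\<bar> \<ge> y} \<omega> \<partial>M);
        L = (\<lambda>y. \<Sum>k=1..n. \<sigma>2z k y);
        f = (\<lambda>k s. char (distr M borel (X k)) s);
        S = (SUP x\<in>{x. 0 < x \<and> ereal x \<le> \<epsilon>}. ereal (x * L x));
        S53 = (SUP x\<in>{x. 0 < x \<and> ereal x \<le> \<epsilon>}. ereal ((x * L x) powr (5/3)))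
    in ereal (\<Sum>k=1..n. (cmod (f k t - 1))\<^sup>2)
         \<le> ereal (t ^ 4) * (ereal (z / 2) * S + ereal ((1/4) * (\<Sum>k=1..n. \<sigma>2 k * \<sigma>2z k z)))
     \<and> ereal (t ^ 4) * (ereal (z / 2) * S + ereal ((1/4) * (\<Sum>k=1..n. \<sigma>2 k * \<sigma>2z k z)))
         \<le> ereal (t ^ 4) * (ereal (z / 2) * S + ereal (alpha \<epsilon> / (4 * z)) * S53)"
proof -
  interpret prob_space M by fact
  show ?thesis
    unfolding Let_def tail_moment_def[symmetric] using rv int1 int2 mean0 norm z_pos z_le
    by (intro conjI ereal_mult_left_mono add_left_mono sum_char_distr_minus_one_sq_le_SUP
        sum_second_moment_mult_tail_le_SUP) auto
qed

end
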